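(* Let $X$ take values in a finite set $\mathcal X$ with $\mathbb{P}(X=x)>0$ for all $x$, let $Y\in[M]$ ($M\ge 2$), $R\in\{0,1\}$, and let $F$ take values in a finite set $\mathcal F$. Assume $F$ is conditionally independent of $R$ given $(Y,X)$, $\mathbb{P}(R=1\mid Y=y,X=x)>0$ for all $x,y$, $\mathbb{P}(R=1,Y=y\mid X=x)>0$ for all $x,y$, and $\mathbb{P}(R=0\mid X=x)>0$ for all $x$. With $\alpha_x(f,y)=\mathbb{P}(R=1,F=f,Y=y\mid X=x)$, $\beta_x(f)=\mathbb{P}(R=0,F=f\mid X=x)$, $A_x=[\alpha_x(f,y)]_{f,y}=[\mathbf a_{x,1},\dots,\mathbf a_{x,M}]$ (columns $\mathbf a_{x,y}\in\mathbb{R}^{|\mathcal F|}$), $\boldsymbol\beta_x=(\beta_x(f))_f$, and $D=\mathrm{diag}(1,\dots,M)$, define \[\theta^{\mathrm{shad}}_{\max}=\sum_{x}\mathbb{P}(X=x)\max\{\mathbf 1^\top A_xD(\mathbf w+\mathbf 1):A_x\mathbf w=\boldsymbol\beta_x,\ \mathbf w\ge\mathbf 0\},\quad \theta^{\mathrm{shad}}_{\min}=\sum_{x}\mathbb{P}(X=x)\min\{\mathbf 1^\top A_xD(\mathbf w+\mathbf 1):A_x\mathbf w=\boldsymbol\beta_x,\ \mathbf w\ge\mathbf 0\},\] and $\theta_{\max}=\mathbb{E}[Y\mathbf 1\{R=1\}]+M\,\mathbb{P}(R=0)$, $\theta_{\min}=\mathbb{E}[Y\mathbf 1\{R=1\}]+\mathbb{P}(R=0)$.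 Then \[\theta_{\max}-\theta^{\mathrm{shad}}_{\max}\ \ge\ \sum_{x\in\mathcal X}\frac{\mathbf 1^\top\boldsymbol\beta_x}{2}\Big\|\frac{\boldsymbol\beta_x}{\mathbf 1^\top\boldsymbol\beta_x}-\frac{\mathbf a_{x,M}}{\mathbf 1^\top\mathbf a_{x,M}}\Big\|_1\mathbb{P}(X=x)\ \ge 0,\] \[\theta^{\mathrm{shad}}_{\min}-\theta_{\min}\ \ge\ \sum_{x\in\mathcal X}\frac{\mathbf 1^\top\boldsymbol\beta_x}{2}\Big\|\frac{\boldsymbol\beta_x}{\mathbf 1^\top\boldsymbol\beta_x}-\frac{\mathbf a_{x,1}}{\mathbf 1^\top\mathbf a_{x,1}}\Big\|_1\mathbb{P}(X=x)\ \ge 0.\]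
   Context: $[\theta_{\min},\theta_{\max}]$ is the identification interval for $\mathbb{E}[Y]$ under outcome-dependent missingness without using $F$; $[\theta^{\mathrm{shad}}_{\min},\theta^{\mathrm{shad}}_{\max}]$ is the identification interval when the auxiliary prediction $F$ (satisfying $F\perp R\mid Y,X$) is also observed. Note $\mathbf 1^\top\boldsymbol\beta_x=\mathbb{P}(R=0\mid X=x)$ and $\mathbf 1^\top\mathbf a_{x,y}=\mathbb{P}(R=1,Y=y\mid X=x)$. *)

theory Defs
  imports Complex_Main
begin

text \<open>The joint law of (X, Y, R, F) is given by a probability mass function
  p x y r f = P(X=x, Y=y, R=r, F=f), with X in the finite type 'x, Y in {1..M},
  R in bool (True = 1), F in the finite type 'f.\<close>

definition is_joint_pmf :: "nat \<Rightarrow> ('x::finite \<Rightarrow> nat \<Rightarrow> bool \<Rightarrow> 'f::finite \<Rightarrow> real) \<Rightarrow> bool" where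
  "is_joint_pmf M p \<longleftrightarrow>
     (\<forall>x y r f. p x y r f \<ge> 0) \<and>
     (\<forall>x y r f. y \<notin> {1..M} \<longrightarrow> p x y r f = 0) \<and>
     (\<Sum>x\<in>UNIV. \<Sum>y\<in>{1..M}. \<Sum>r\<in>UNIV. \<Sum>f\<in>UNIV. p x y r f) = 1"

definition PX :: "nat \<Rightarrow> ('x::finite \<Rightarrow> nat \<Rightarrow> bool \<Rightarrow> 'f::finite \<Rightarrow> real) \<Rightarrow> 'x \<Rightarrow> real" where
  "PX M p x = (\<Sum>y\<in>{1..M}. \<Sum>r\<in>UNIV. \<Sum>f\<in>UNIV. p x y r f)"

definition PYX :: "('x::finite \<Rightarrow> nat \<Rightarrow> bool \<Rightarrow> 'f::finite \<Rightarrow> real) \<Rightarrow> nat \<Rightarrow> 'x \<Rightarrow> real" where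
  "PYX p y x = (\<Sum>r\<in>UNIV. \<Sum>f\<in>UNIV. p x y r f)"

definition PRYX :: "('x::finite \<Rightarrow> nat \<Rightarrow> bool \<Rightarrow> 'f::finite \<Rightarrow> real) \<Rightarrow> bool \<Rightarrow> nat \<Rightarrow> 'x \<Rightarrow> real" where
  "PRYX p r y x = (\<Sum>f\<in>UNIV. p x y r f)"

definition PFYX :: "('x::finite \<Rightarrow> nat \<Rightarrow> bool \<Rightarrow> 'f::finite \<Rightarrow> real) \<Rightarrow> 'f \<Rightarrow> nat \<Rightarrow> 'x \<Rightarrow> real" where
  "PFYX p f y x = (\<Sum>r\<in>UNIV. p x y r f)"

definition PRX :: "nat \<Rightarrow> ('x::finite \<Rightarrow> nat \<Rightarrow> bool \<Rightarrow> 'f::finite \<Rightarrow> real) \<Rightarrow> bool \<Rightarrow> 'x \<Rightarrow> real" where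
  "PRX M p r x = (\<Sum>y\<in>{1..M}. \<Sum>f\<in>UNIV. p x y r f)"

text \<open>F conditionally independent of R given (Y, X):
  P(F=f,R=r | Y=y,X=x) = P(F=f | Y=y,X=x) P(R=r | Y=y,X=x), written multiplicatively.\<close>
definition cond_indep_F_R :: "('x::finite \<Rightarrow> nat \<Rightarrow> bool \<Rightarrow> 'f::finite \<Rightarrow> real) \<Rightarrow> bool" where
  "cond_indep_F_R p \<longleftrightarrow>
     (\<forall>x y r f. p x y r f * PYX p y x = PFYX p f y x * PRYX p r y x)"

definition alpha :: "nat \<Rightarrow> ('x::finite \<Rightarrow> nat \<Rightarrow> bool \<Rightarrow> 'f::finite \<Rightarrow> real) \<Rightarrow> 'x \<Rightarrow> 'f \<Rightarrow> nat \<Rightarrow> real" where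
  "alpha M p x f y = p x y True f / PX M p x"

definition beta :: "nat \<Rightarrow> ('x::finite \<Rightarrow> nat \<Rightarrow> bool \<Rightarrow> 'f::finite \<Rightarrow> real) \<Rightarrow> 'x \<Rightarrow> 'f \<Rightarrow> real" where
  "beta M p x f = (\<Sum>y\<in>{1..M}. p x y False f) / PX M p x"

text \<open>The value set of the LP: { 1^T A_x D (w + 1) : A_x w = beta_x, w >= 0 }, w in R^M
  represented as a function on {1..M}.\<close>
definition lp_values :: "nat \<Rightarrow> ('x::finite \<Rightarrow> nat \<Rightarrow> bool \<Rightarrow> 'f::finite \<Rightarrow> real) \<Rightarrow> 'x \<Rightarrow> real set" where
  "lp_values M p x =
     {(\<Sum>f\<in>UNIV. \<Sum>y\<in>{1..M}. alpha M p x f y * real y * (w y + 1)) | w.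
        (\<forall>y\<in>{1..M}. w y \<ge> 0) \<and>
        (\<forall>f. (\<Sum>y\<in>{1..M}. alpha M p x f y * w y) = beta M p x f)}"

definition theta_shad_max :: "nat \<Rightarrow> ('x::finite \<Rightarrow> nat \<Rightarrow> bool \<Rightarrow> 'f::finite \<Rightarrow> real) \<Rightarrow> real" where
  "theta_shad_max M p = (\<Sum>x\<in>UNIV. PX M p x * Sup (lp_values M p x))"

definition theta_shad_min :: "nat \<Rightarrow> ('x::finite \<Rightarrow> nat \<Rightarrow> bool \<Rightarrow> 'f::finite \<Rightarrow> real) \<Rightarrow> real" where
  "theta_shad_min M p = (\<Sum>x\<in>UNIV. PX M p x * Inf (lp_values M p x))"

definition EY_R1 :: "nat \<Rightarrow> ('x::finite \<Rightarrow> nat \<Rightarrow> bool \<Rightarrow> 'f::finite \<Rightarrow> real) \<Rightarrow> real" where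
  "EY_R1 M p = (\<Sum>x\<in>UNIV. \<Sum>y\<in>{1..M}. \<Sum>f\<in>UNIV. real y * p x y True f)"

definition PR0 :: "nat \<Rightarrow> ('x::finite \<Rightarrow> nat \<Rightarrow> bool \<Rightarrow> 'f::finite \<Rightarrow> real) \<Rightarrow> real" where
  "PR0 M p = (\<Sum>x\<in>UNIV. \<Sum>y\<in>{1..M}. \<Sum>f\<in>UNIV. p x y False f)"

definition theta_max :: "nat \<Rightarrow> ('x::finite \<Rightarrow> nat \<Rightarrow> bool \<Rightarrow> 'f::finite \<Rightarrow> real) \<Rightarrow> real" where
  "theta_max M p = EY_R1 M p + real M * PR0 M p"

definition theta_min :: "nat \<Rightarrow> ('x::finite \<Rightarrow> nat \<Rightarrow> bool \<Rightarrow> 'f::finite \<Rightarrow> real) \<Rightarrow> real" where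
  "theta_min M p = EY_R1 M p + PR0 M p"

definition tv_term :: "nat \<Rightarrow> ('x::finite \<Rightarrow> nat \<Rightarrow> bool \<Rightarrow> 'f::finite \<Rightarrow> real) \<Rightarrow> 'x \<Rightarrow> nat \<Rightarrow> real" where
  "tv_term M p x y =
     (let sb = (\<Sum>f\<in>UNIV. beta M p x f); sa = (\<Sum>f\<in>UNIV. alpha M p x f y)
      in sb / 2 * (\<Sum>f\<in>UNIV. \<bar>beta M p x f / sb - alpha M p x f y / sa\<bar>))"

end

theory Submission
  imports Defs
begin

(*
  Fix a stratum x and write S_y = 1^T a_{x,y}. A feasible w writes beta_x as the nonnegative
  combination sum_y w_y a_{x,y}, so 1^T beta_x = sum_y S_y w_y, while the LP objective equals
  1^T A_x D 1 + sum_y y S_y w_y. Bounding every weight y < M by M - 1 shows that the objective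
  falls short of 1^T A_x D 1 + M 1^T beta_x by at least the mass sum_{y <> M} S_y w_y that
  beta_x draws from columns other than a_{x,M}. Since beta_x is a multiple of a_{x,M} plus
  exactly this mass, the mass dominates 1^T beta_x times the total variation distance between
  the normalisations of beta_x and a_{x,M}. The minimum is handled symmetrically with y = 1.
  The LP is feasible because, F being a shadow variable, the odds
  w_y = P(R=0, Y=y | X=x) / P(R=1, Y=y | X=x) solve A_x w = beta_x; hence the bounds pass to
  Sup and Inf, and averaging over X gives the theorem.
*)

definition tv_dist :: "('f::finite \<Rightarrow> real) \<Rightarrow> ('f \<Rightarrow> real) \<Rightarrow> real" where
  "tv_dist u v = (\<Sum>f\<in>UNIV. \<bar>u f / sum u UNIV - v f / sum v UNIV\<bar>) / 2"

lemma tv_dist_nonneg: "tv_dist u v \<ge> 0"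
  unfolding tv_dist_def by (simp add: sum_nonneg)

lemma mass_mult_tv_dist_mixture_le:
  fixes s a :: "'f::finite \<Rightarrow> real"
  assumes s: "\<And>f. s f \<ge> 0" and a: "\<And>f. a f \<ge> 0"
    and SA: "sum a UNIV > 0" and SB: "(\<Sum>f\<in>UNIV. s f + c * a f) > 0"
  shows "(\<Sum>f\<in>UNIV. s f + c * a f) * tv_dist (\<lambda>f. s f + c * a f) a \<le> sum s UNIV"
proof -
  define t where "t = sum s UNIV"
  have t: "t \<ge> 0" unfolding t_def using s by (simp add: sum_nonneg)
  have mass: "(\<Sum>f\<in>UNIV. s f + c * a f) = t + c * sum a UNIV"
    by (simp add: t_def sum.distrib sum_distrib_left)
  have shift: "(s f + c * a f) / (\<Sum>f\<in>UNIV. s f + c * a f) - a f / sum a UNIV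
      = (s f - t / sum a UNIV * a f) / (\<Sum>f\<in>UNIV. s f + c * a f)" for f
    using SA SB unfolding mass by (simp add: field_simps)
  have "(\<Sum>f\<in>UNIV. \<bar>s f - t / sum a UNIV * a f\<bar>) \<le> (\<Sum>f\<in>UNIV. s f + t / sum a UNIV * a f)"
    using s a t SA by (intro sum_mono) (simp add: abs_le_iff)
  also have "\<dots> = t + t / sum a UNIV * sum a UNIV"
    by (simp add: t_def sum.distrib sum_distrib_left)
  also have "\<dots> = 2 * t"
    using SA by simp
  finally show ?thesis
    using SB by (simp add: tv_dist_def shift sum_divide_distrib[symmetric] t_def)
qed

lemma mass_mult_tv_dist_column_le:
  fixes a :: "'f::finite \<Rightarrow> 'y \<Rightarrow> real" and w :: "'y \<Rightarrow> real"
  assumes "finite Y" and "y0 \<in> Y" and a: "\<And>f y. a f y \<ge> 0" and w: "\<forall>y\<in>Y. w y \<ge> 0"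
    and b: "\<forall>f. (\<Sum>y\<in>Y. a f y * w y) = b f"
    and "(\<Sum>f\<in>UNIV. a f y0) > 0" and "sum b UNIV > 0"
  shows "sum b UNIV * tv_dist b (\<lambda>f. a f y0) \<le> (\<Sum>y\<in>Y - {y0}. (\<Sum>f\<in>UNIV. a f y) * w y)"
proof -
  define s where "s f = (\<Sum>y\<in>Y - {y0}. a f y * w y)" for f
  have b_eq: "b = (\<lambda>f. s f + w y0 * a f y0)"
  proof
    fix f
    show "b f = s f + w y0 * a f y0"
      using b sum.remove[OF assms(1,2), of "\<lambda>y. a f y * w y"] by (simp add: s_def)
  qed
  have "s f \<ge> 0" for f
    unfolding s_def using a w by (auto intro: sum_nonneg)
  then have "sum b UNIV * tv_dist b (\<lambda>f. a f y0) \<le> sum s UNIV"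
    unfolding b_eq using assms(6,7) a b_eq by (intro mass_mult_tv_dist_mixture_le) auto
  also have "sum s UNIV = (\<Sum>y\<in>Y - {y0}. (\<Sum>f\<in>UNIV. a f y) * w y)"
    unfolding s_def by (simp add: sum.swap[of _ UNIV] sum_distrib_right)
  finally show ?thesis .
qed

lemma sum_index_weighted_upper:
  fixes u :: "nat \<Rightarrow> real"
  assumes "\<forall>y\<in>{1..M}. u y \<ge> 0"
  shows "(\<Sum>y\<in>{1..M}. real y * u y) + (\<Sum>y\<in>{1..M} - {M}. u y) \<le> real M * (\<Sum>y\<in>{1..M}. u y)"
proof -
  have "(\<Sum>y\<in>{1..M} - {M}. u y) \<le> (\<Sum>y\<in>{1..M} - {M}. (real M - real y) * u y)"
  proof (rule sum_mono)
    fix y assume "y \<in> {1..M} - {M}"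
    then show "u y \<le> (real M - real y) * u y"
      using assms mult_right_mono[of 1 "real M - real y" "u y"] by auto
  qed
  also have "\<dots> = (\<Sum>y\<in>{1..M}. (real M - real y) * u y)"
    by (intro sum.mono_neutral_left) auto
  finally show ?thesis
    by (simp add: left_diff_distrib sum_subtractf sum_distrib_left)
qed

lemma sum_index_weighted_lower:
  fixes u :: "nat \<Rightarrow> real"
  assumes "\<forall>y\<in>{1..M}. u y \<ge> 0"
  shows "(\<Sum>y\<in>{1..M}. u y) + (\<Sum>y\<in>{1..M} - {1}. u y) \<le> (\<Sum>y\<in>{1..M}. real y * u y)"
proof -
  have "(\<Sum>y\<in>{1..M} - {1}. u y) \<le> (\<Sum>y\<in>{1..M} - {1}. (real y - 1) * u y)"
  proof (rule sum_mono)
    fix y assume "y \<in> {1..M} - {1}"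
    then show "u y \<le> (real y - 1) * u y"
      using assms mult_right_mono[of 1 "real y - 1" "u y"] by auto
  qed
  also have "\<dots> = (\<Sum>y\<in>{1..M}. (real y - 1) * u y)"
    by (intro sum.mono_neutral_left) auto
  finally show ?thesis
    by (simp add: left_diff_distrib sum_subtractf)
qed

lemma lp_objective_bounds:
  fixes a :: "'f::finite \<Rightarrow> nat \<Rightarrow> real" and b :: "'f \<Rightarrow> real" and w :: "nat \<Rightarrow> real"
  assumes "M \<ge> 1" and a: "\<And>f y. a f y \<ge> 0" and w: "\<forall>y\<in>{1..M}. w y \<ge> 0"
    and b: "\<forall>f. (\<Sum>y\<in>{1..M}. a f y * w y) = b f"
    and "\<forall>y\<in>{1..M}. (\<Sum>f\<in>UNIV. a f y) > 0" and "sum b UNIV > 0"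
  shows "(\<Sum>f\<in>UNIV. \<Sum>y\<in>{1..M}. a f y * real y * (w y + 1))
           \<le> (\<Sum>y\<in>{1..M}. real y * (\<Sum>f\<in>UNIV. a f y)) + real M * sum b UNIV
              - sum b UNIV * tv_dist b (\<lambda>f. a f M)" (is ?upper)
    and "(\<Sum>y\<in>{1..M}. real y * (\<Sum>f\<in>UNIV. a f y)) + sum b UNIV
              + sum b UNIV * tv_dist b (\<lambda>f. a f 1)
           \<le> (\<Sum>f\<in>UNIV. \<Sum>y\<in>{1..M}. a f y * real y * (w y + 1))" (is ?lower)
proof -
  define u where "u y = (\<Sum>f\<in>UNIV. a f y) * w y" for y
  have u: "\<forall>y\<in>{1..M}. u y \<ge> 0"
    using a w by (simp add: u_def sum_nonneg)
  have objective: "(\<Sum>f\<in>UNIV. \<Sum>y\<in>{1..M}. a f y * real y * (w y + 1))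
      = (\<Sum>y\<in>{1..M}. real y * (\<Sum>f\<in>UNIV. a f y)) + (\<Sum>y\<in>{1..M}. real y * u y)"
    by (simp add: u_def sum.swap[of _ UNIV] sum_distrib_left sum_distrib_right
        algebra_simps flip: sum.distrib)
  have mass: "sum b UNIV = (\<Sum>y\<in>{1..M}. u y)"
    using b by (simp add: u_def sum.swap[of _ UNIV] sum_distrib_right)
  have "sum b UNIV * tv_dist b (\<lambda>f. a f y0) \<le> (\<Sum>y\<in>{1..M} - {y0}. u y)" if "y0 \<in> {1..M}" for y0
    unfolding u_def using assms that by (intro mass_mult_tv_dist_column_le) auto
  then have tv_M: "sum b UNIV * tv_dist b (\<lambda>f. a f M) \<le> (\<Sum>y\<in>{1..M} - {M}. u y)"
    and tv_1: "sum b UNIV * tv_dist b (\<lambda>f. a f 1) \<le> (\<Sum>y\<in>{1..M} - {1}. u y)"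
    using \<open>M \<ge> 1\<close> by auto
  note bounds = sum_index_weighted_upper[OF u] sum_index_weighted_lower[OF u] objective mass
  show ?upper using bounds tv_M unfolding mass by linarith
  show ?lower using bounds tv_1 by linarith
qed

lemma cond_indep_F_R_cross:
  assumes "cond_indep_F_R p" and "PYX p y x \<noteq> 0"
  shows "p x y True f * PRYX p False y x = p x y False f * PRYX p True y x"
proof -
  from assms(1) have "p x y True f * PYX p y x = PFYX p f y x * PRYX p True y x"
    and "p x y False f * PYX p y x = PFYX p f y x * PRYX p False y x"
    unfolding cond_indep_F_R_def by blast+
  then have "p x y True f * PRYX p False y x * PYX p y x
      = p x y False f * PRYX p True y x * PYX p y x"
    by algebra
  with assms(2) show ?thesis by simp
qed

lemma PYX_eq_PRYX: "PYX p y x = PRYX p True y x + PRYX p False y x"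
  unfolding PYX_def PRYX_def by (simp add: UNIV_bool)

lemma lp_values_nonempty:
  assumes "is_joint_pmf M p" and "cond_indep_F_R p" and "\<forall>y\<in>{1..M}. PRYX p True y x > 0"
  shows "lp_values M p x \<noteq> {}"
proof -
  have nonneg: "\<And>x y r f. p x y r f \<ge> 0"
    using assms(1) by (simp add: is_joint_pmf_def)
  define w where "w y = PRYX p False y x / PRYX p True y x" for y
  have "alpha M p x f y * w y = p x y False f / PX M p x" if "y \<in> {1..M}" for f y
  proof -
    have pos: "PRYX p True y x > 0"
      using assms(3) that by blast
    moreover have "PRYX p False y x \<ge> 0"
      by (simp add: PRYX_def nonneg sum_nonneg)
    ultimately have "PYX p y x \<noteq> 0"
      by (simp add: PYX_eq_PRYX)
    with pos show ?thesis
      using cond_indep_F_R_cross[OF assms(2)] by (simp add: alpha_def w_def field_simps)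
  qed
  then have "\<forall>f. (\<Sum>y\<in>{1..M}. alpha M p x f y * w y) = beta M p x f"
    by (simp add: beta_def sum_divide_distrib)
  moreover have "\<forall>y\<in>{1..M}. w y \<ge> 0"
    by (simp add: w_def PRYX_def nonneg sum_nonneg)
  ultimately show ?thesis
    unfolding lp_values_def by blast
qed

definition EY_R1_given :: "nat \<Rightarrow> ('x::finite \<Rightarrow> nat \<Rightarrow> bool \<Rightarrow> 'f::finite \<Rightarrow> real) \<Rightarrow> 'x \<Rightarrow> real" where
  "EY_R1_given M p x = (\<Sum>y\<in>{1..M}. real y * (\<Sum>f\<in>UNIV. alpha M p x f y))"

lemma tv_term_eq_tv_dist:
  "tv_term M p x y = sum (beta M p x) UNIV * tv_dist (beta M p x) (\<lambda>f. alpha M p x f y)"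
  unfolding tv_term_def tv_dist_def Let_def by simp

lemma sum_alpha: "(\<Sum>f\<in>UNIV. alpha M p x f y) = PRYX p True y x / PX M p x"
  unfolding alpha_def PRYX_def by (simp add: sum_divide_distrib)

lemma sum_beta: "sum (beta M p x) UNIV = PRX M p False x / PX M p x"
  unfolding beta_def PRX_def by (simp add: sum.swap[of _ UNIV] flip: sum_divide_distrib)

lemma lp_values_bounds:
  assumes "M \<ge> 1" and pmf: "is_joint_pmf M p" and ci: "cond_indep_F_R p" and PX: "PX M p x > 0"
    and R1: "\<forall>y\<in>{1..M}. PRYX p True y x > 0" and R0: "PRX M p False x > 0"
  shows "tv_term M p x M
           \<le> EY_R1_given M p x + real M * sum (beta M p x) UNIV - Sup (lp_values M p x)" (is ?upper)
    and "tv_term M p x 1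
           \<le> Inf (lp_values M p x) - EY_R1_given M p x - sum (beta M p x) UNIV" (is ?lower)
proof -
  have alpha: "alpha M p x f y \<ge> 0" for f y
    using pmf PX by (simp add: is_joint_pmf_def alpha_def)
  have cols: "\<forall>y\<in>{1..M}. (\<Sum>f\<in>UNIV. alpha M p x f y) > 0"
    using R1 PX by (simp add: sum_alpha)
  have mass: "sum (beta M p x) UNIV > 0"
    using R0 PX by (simp add: sum_beta)
  note objective_bounds = lp_objective_bounds[OF \<open>M \<ge> 1\<close> alpha _ _ cols mass]
  have "v \<le> EY_R1_given M p x + real M * sum (beta M p x) UNIV - tv_term M p x M"
    and "EY_R1_given M p x + sum (beta M p x) UNIV + tv_term M p x 1 \<le> v"
    if "v \<in> lp_values M p x" for v
    using that objective_bounds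
    by (auto simp: lp_values_def EY_R1_given_def tv_term_eq_tv_dist)
  with lp_values_nonempty[OF pmf ci R1]
  have "Sup (lp_values M p x) \<le> EY_R1_given M p x + real M * sum (beta M p x) UNIV - tv_term M p x M"
    and "EY_R1_given M p x + sum (beta M p x) UNIV + tv_term M p x 1 \<le> Inf (lp_values M p x)"
    by (auto intro: cSup_least cInf_greatest)
  then show ?upper and ?lower
    by simp_all
qed

lemma EY_R1_eq_sum_PX:
  assumes "\<forall>x. PX M p x > 0"
  shows "EY_R1 M p = (\<Sum>x\<in>UNIV. PX M p x * EY_R1_given M p x)"
proof -
  have "EY_R1_given M p x = (\<Sum>y\<in>{1..M}. \<Sum>f\<in>UNIV. real y * p x y True f) / PX M p x" for x
    by (simp add: EY_R1_given_def alpha_def sum_divide_distrib sum_distrib_left)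
  then have "PX M p x * EY_R1_given M p x = (\<Sum>y\<in>{1..M}. \<Sum>f\<in>UNIV. real y * p x y True f)" for x
    using assms[rule_format, of x] by simp
  then show ?thesis
    by (simp add: EY_R1_def)
qed

lemma PR0_eq_sum_PX:
  assumes "\<forall>x. PX M p x > 0"
  shows "PR0 M p = (\<Sum>x\<in>UNIV. PX M p x * sum (beta M p x) UNIV)"
proof -
  have "PX M p x * sum (beta M p x) UNIV = (\<Sum>y\<in>{1..M}. \<Sum>f\<in>UNIV. p x y False f)" for x
    using assms[rule_format, of x] by (simp add: sum_beta PRX_def)
  then show ?thesis
    by (simp add: PR0_def)
qed

lemma theta_max_minus_theta_shad_max:
  assumes "\<forall>x. PX M p x > 0"
  shows "theta_max M p - theta_shad_max M p
    = (\<Sum>x\<in>UNIV. PX M p x *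
         (EY_R1_given M p x + real M * sum (beta M p x) UNIV - Sup (lp_values M p x)))"
  using assms
  by (simp add: theta_max_def theta_shad_max_def EY_R1_eq_sum_PX PR0_eq_sum_PX
      sum_distrib_left algebra_simps sum_subtractf sum.distrib)

lemma theta_shad_min_minus_theta_min:
  assumes "\<forall>x. PX M p x > 0"
  shows "theta_shad_min M p - theta_min M p
    = (\<Sum>x\<in>UNIV. PX M p x *
         (Inf (lp_values M p x) - EY_R1_given M p x - sum (beta M p x) UNIV))"
  using assms
  by (simp add: theta_min_def theta_shad_min_def EY_R1_eq_sum_PX PR0_eq_sum_PX
      algebra_simps sum_subtractf sum.distrib)

theorem theorem1:
  fixes M :: nat and p :: "'x::finite \<Rightarrow> nat \<Rightarrow> bool \<Rightarrow> 'f::finite \<Rightarrow> real"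
  assumes "M \<ge> 2"
    and "is_joint_pmf M p"
    and "\<forall>x. PX M p x > 0"
    and "cond_indep_F_R p"
    and "\<forall>x. \<forall>y\<in>{1..M}. PRYX p True y x / PYX p y x > 0"
    and "\<forall>x. \<forall>y\<in>{1..M}. PRYX p True y x / PX M p x > 0"
    and "\<forall>x. PRX M p False x / PX M p x > 0"
  shows "theta_max M p - theta_shad_max M p \<ge> (\<Sum>x\<in>UNIV. tv_term M p x M * PX M p x)
         \<and> (\<Sum>x\<in>UNIV. tv_term M p x M * PX M p x) \<ge> 0
         \<and> theta_shad_min M p - theta_min M p \<ge> (\<Sum>x\<in>UNIV. tv_term M p x 1 * PX M p x)
         \<and> (\<Sum>x\<in>UNIV. tv_term M p x 1 * PX M p x) \<ge> 0"
proof -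
  have PX: "PX M p x > 0" for x
    using assms(3) by blast
  have R1: "\<forall>y\<in>{1..M}. PRYX p True y x > 0" for x
    using assms(6) PX[of x] by (fastforce simp: zero_less_divide_iff)
  have R0: "PRX M p False x > 0" for x
    using assms(7) PX[of x] by (auto simp: zero_less_divide_iff)
  note per_x = lp_values_bounds[OF _ assms(2,4) PX R1 R0]
  have "(\<Sum>x\<in>UNIV. tv_term M p x M * PX M p x) \<le> theta_max M p - theta_shad_max M p"
    unfolding theta_max_minus_theta_shad_max[OF assms(3)]
    using per_x(1) assms(1) PX by (intro sum_mono) (simp add: mult.commute less_imp_le)
  moreover have "(\<Sum>x\<in>UNIV. tv_term M p x 1 * PX M p x) \<le> theta_shad_min M p - theta_min M p"
    unfolding theta_shad_min_minus_theta_min[OF assms(3)]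
    using per_x(2) assms(1) PX by (intro sum_mono) (simp add: mult.commute less_imp_le)
  moreover have "(\<Sum>x\<in>UNIV. tv_term M p x y * PX M p x) \<ge> 0" for y
  proof (rule sum_nonneg)
    fix x
    show "tv_term M p x y * PX M p x \<ge> 0"
      unfolding tv_term_eq_tv_dist sum_beta using PX[of x] R0[of x] by (simp add: tv_dist_nonneg)
  qed
  ultimately show ?thesis
    by blast
qed

end
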